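(* Let $J=\{i_1,\dots,i_n\}\subset\mathbb N_+$ be finite with $n\ge1$. If $n=2t+1$, then $M_J$ is stably isomorphic as a $\Lambda(Q_1,P)$-module to a direct sum of $2^t$ copies of $\Lambda(Q_1)=\Lambda(Q_1,P)/(P)$. If $n=2t$, then $M_J$ is stably isomorphic to a direct sum of $2^{t-1}$ copies of $M_{[2]}$.
   Context: Over $\mathbb F_2$, $\Lambda(Q_1,P)$ is the exterior algebra on $Q_1,P$, a Hopf algebra with $Q_1$ primitive and $\Delta(P)=P\otimes1+Q_1\otimes Q_1+1\otimes P$. For $i\in\mathbb N_+$, $M_i$ has basis $t_i,x_i$ with $Q_1(x_i)=t_i$, $Q_1(t_i)=0$, $P=0$; for finite $J\subset\mathbb N_+$, $M_J=\bigotimes_{j\in J}M_j$ with the action through the coproduct; $[2]=\{1,2\}$. Two modules $M,N$ are stably isomorphic if $F\oplus M\cong F'\oplus N$ for free $\Lambda(Q_1,P)$-modules $F,F'$. *)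

theory Defs
  imports "HOL-Library.Z2" "Jordan_Normal_Form.Matrix"
begin

text \<open>A finite-dimensional module over Lambda(Q1,P) over F2 (type bit) is represented by
  the pair of square matrices (q, p) of the same size describing the actions of Q1 and P
  (with respect to a chosen basis).\<close>

type_synonym lmod = "bit mat \<times> bit mat"

definition ldim :: "lmod \<Rightarrow> nat" where
  "ldim M = dim_row (fst M)"

definition lmod_iso :: "lmod \<Rightarrow> lmod \<Rightarrow> bool" where
  "lmod_iso M N \<longleftrightarrow> ldim M = ldim N \<and>
     (\<exists>S. S \<in> carrier_mat (ldim N) (ldim M) \<and> invertible_mat S \<and>
          S * fst M = fst N * S \<and> S * snd M = snd N * S)"

definition mat_dsum :: "bit mat \<Rightarrow> bit mat \<Rightarrow> bit mat" where
  "mat_dsum A B = four_block_mat A (0\<^sub>m (dim_row A) (dim_col B))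
                                   (0\<^sub>m (dim_row B) (dim_col A)) B"

definition lmod_sum :: "lmod \<Rightarrow> lmod \<Rightarrow> lmod" where
  "lmod_sum M N = (mat_dsum (fst M) (fst N), mat_dsum (snd M) (snd N))"

definition lmod_zero :: lmod where
  "lmod_zero = (0\<^sub>m 0 0, 0\<^sub>m 0 0)"

primrec lmod_copies :: "nat \<Rightarrow> lmod \<Rightarrow> lmod" where
  "lmod_copies 0 M = lmod_zero"
| "lmod_copies (Suc k) M = lmod_sum M (lmod_copies k M)"

text \<open>Kronecker product of matrices, and tensor product of modules with the action through
  the coproduct: Q1 primitive, Delta(P) = P\<otimes>1 + Q1\<otimes>Q1 + 1\<otimes>P.\<close>
definition kron :: "bit mat \<Rightarrow> bit mat \<Rightarrow> bit mat" where
  "kron A B = mat (dim_row A * dim_row B) (dim_col A * dim_col B)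
     (\<lambda>(i, j). A $$ (i div dim_row B, j div dim_col B) * B $$ (i mod dim_row B, j mod dim_col B))"

definition lmod_tensor :: "lmod \<Rightarrow> lmod \<Rightarrow> lmod" where
  "lmod_tensor M N =
    (let m = ldim M; n = ldim N in
     (kron (fst M) (1\<^sub>m n) + kron (1\<^sub>m m) (fst N),
      kron (snd M) (1\<^sub>m n) + kron (fst M) (fst N) + kron (1\<^sub>m m) (snd N)))"

definition lmod_unit :: lmod where
  "lmod_unit = (0\<^sub>m 1 1, 0\<^sub>m 1 1)"

text \<open>The free module Lambda(Q1,P) of rank one, basis 1, Q1, P, Q1P (indices 0,1,2,3).\<close>
definition Lam :: lmod where
  "Lam = (mat 4 4 (\<lambda>(i, j). if (i, j) = (1, 0) \<or> (i, j) = (3, 2) then 1 else 0),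
          mat 4 4 (\<lambda>(i, j). if (i, j) = (2, 0) \<or> (i, j) = (3, 1) then 1 else 0))"

text \<open>Lambda(Q1) = Lambda(Q1,P)/(P), basis 1, Q1 (indices 0,1), P acting by zero.\<close>
definition LamQ1 :: lmod where
  "LamQ1 = (mat 2 2 (\<lambda>(i, j). if (i, j) = (1, 0) then 1 else 0), 0\<^sub>m 2 2)"

text \<open>M_i: basis t_i, x_i (indices 0,1), Q1 x_i = t_i, Q1 t_i = 0, P = 0.
  (As an ungraded module, M_i does not depend on i.)\<close>
definition Mi :: "nat \<Rightarrow> lmod" where
  "Mi i = (mat 2 2 (\<lambda>(i, j). if (i, j) = (0, 1) then 1 else 0), 0\<^sub>m 2 2)"

definition MJ :: "nat set \<Rightarrow> lmod" where
  "MJ J = foldr (\<lambda>j N. lmod_tensor (Mi j) N) (sorted_list_of_set J) lmod_unit"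

definition free_lmod :: "nat \<Rightarrow> lmod" where
  "free_lmod r = lmod_copies r Lam"

definition stably_iso :: "lmod \<Rightarrow> lmod \<Rightarrow> bool" where
  "stably_iso M N \<longleftrightarrow> (\<exists>a b. lmod_iso (lmod_sum (free_lmod a) M) (lmod_sum (free_lmod b) N))"

end

theory Submission
  imports Defs
begin

text \<open>As an ungraded module \<open>M\<^sub>i\<close> does not depend on \<open>i\<close>, so \<open>M\<^sub>J\<close> is the \<open>n\<close>-th
  tensor power of \<open>M = M\<^sub>1\<close>. Explicit changes of basis show that \<open>M \<cong> \<Lambda>(Q\<^sub>1)\<close>, that
  \<open>\<Lambda>(Q\<^sub>1,P) \<otimes> M\<close> is free of rank two, that \<open>\<Lambda>(Q\<^sub>1) \<otimes> M \<cong> M \<otimes> M = M\<^bsub>[2]\<^esub>\<close>, and that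
  \<open>M\<^bsub>[2]\<^esub> \<otimes> M \<cong> \<Lambda>(Q\<^sub>1,P) \<oplus> \<Lambda>(Q\<^sub>1) \<oplus> \<Lambda>(Q\<^sub>1)\<close>. As \<open>- \<otimes> M\<close> distributes over direct
  sums and preserves freeness, induction on \<open>n\<close> alternates between \<open>2\<^sup>t\<close> copies of \<open>\<Lambda>(Q\<^sub>1)\<close>
  (odd \<open>n = 2t + 1\<close>) and \<open>2\<^sup>t\<close> copies of \<open>M\<^bsub>[2]\<^esub>\<close> (even \<open>n = 2t + 2\<close>), modulo free summands.\<close>

section \<open>Kronecker products and block-diagonal sums of matrices\<close>

lemma kron_dims [simp]:
  "dim_row (kron A B) = dim_row A * dim_row B" "dim_col (kron A B) = dim_col A * dim_col B"
  unfolding kron_def by simp_all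

lemma kron_index:
  "i < dim_row A * dim_row B \<Longrightarrow> j < dim_col A * dim_col B \<Longrightarrow>
   kron A B $$ (i, j) = A $$ (i div dim_row B, j div dim_col B) * B $$ (i mod dim_row B, j mod dim_col B)"
  unfolding kron_def by (subst index_mat) auto

lemma kron_carrier [simp]:
  assumes "A \<in> carrier_mat a a'" "B \<in> carrier_mat b b'"
  shows "kron A B \<in> carrier_mat (a * b) (a' * b')"
  using assms by (intro carrier_matI) (simp_all only: kron_dims carrier_matD)

lemma index_mult_mat_sum:
  assumes A: "A \<in> carrier_mat n m" and B: "B \<in> carrier_mat m k" and i: "i < n" and j: "j < k"
  shows "(A * B) $$ (i, j) = (\<Sum>l\<in>{0..<m}. A $$ (i, l) * B $$ (l, j))"
proof -
  have d: "dim_row A = n" "dim_col A = m" "dim_row B = m" "dim_col B = k" using A B by auto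
  have "(A * B) $$ (i, j) = row A i \<bullet> col B j" using d i j by (simp only: index_mult_mat)
  also have "\<dots> = (\<Sum>l\<in>{0..<m}. row A i $ l * col B j $ l)" by (simp only: scalar_prod_def dim_col d)
  also have "\<dots> = (\<Sum>l\<in>{0..<m}. A $$ (i, l) * B $$ (l, j))"
    using i j d by (intro sum.cong) simp_all
  finally show ?thesis .
qed

lemma sum_atLeast0_mult_nested:
  "(\<Sum>k\<in>{0..<a * b}. f k) = (\<Sum>k1\<in>{0..<a}. \<Sum>k2\<in>{0..<b}. f (k1 * b + k2 :: nat))"
proof (induction a)
  case (Suc a)
  have "(\<Sum>k\<in>{0..<Suc a * b}. f k) = (\<Sum>k\<in>{0..<a * b}. f k) + (\<Sum>k\<in>{a * b..<a * b + b}. f k)"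
    by (simp add: add.commute sum.atLeastLessThan_concat)
  also have "(\<Sum>k\<in>{a * b..<a * b + b}. f k) = (\<Sum>k2\<in>{0..<b}. f (a * b + k2))"
    using sum.shift_bounds_nat_ivl[of f 0 "a * b" b] by (simp add: add.commute)
  finally show ?case using Suc by simp
qed simp

lemma kron_index_block:
  assumes "i1 < dim_row A" "i2 < dim_row B" "j1 < dim_col A" "j2 < dim_col B"
  shows "kron A B $$ (i1 * dim_row B + i2, j1 * dim_col B + j2) = A $$ (i1, j1) * B $$ (i2, j2)"
proof -
  have bound: "x * m + y < n * m" if "x < n" "y < m" for x y n m :: nat
  proof -
    have "x * m + y < Suc x * m" using that(2) by simp
    also have "\<dots> \<le> n * m" using that(1) by (intro mult_le_mono1) simp
    finally show ?thesis .
  qed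
  have div_mod: "(x * m + y) div m = x" "(x * m + y) mod m = y" if "y < m" for x y m :: nat
    using that by auto
  show ?thesis
    using kron_index[OF bound[OF assms(1,2)] bound[OF assms(3,4)]]
    by (simp only: div_mod[OF assms(2)] div_mod[OF assms(4)])
qed

lemma kron_mult:
  assumes A: "A \<in> carrier_mat a a'" and B: "B \<in> carrier_mat b b'"
    and C: "C \<in> carrier_mat a' c" and D: "D \<in> carrier_mat b' d"
  shows "kron A B * kron C D = kron (A * C) (B * D)"
proof (rule eq_matI)
  have dims: "dim_row A = a" "dim_col A = a'" "dim_row B = b" "dim_col B = b'"
    "dim_row C = a'" "dim_col C = c" "dim_row D = b'" "dim_col D = d"
    "dim_row (A * C) = a" "dim_col (A * C) = c" "dim_row (B * D) = b" "dim_col (B * D) = d"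
    using A B C D by auto
  fix i j assume "i < dim_row (kron (A * C) (B * D))" and "j < dim_col (kron (A * C) (B * D))"
  then have ia: "i < a * b" and jc: "j < c * d" using A B C D by simp_all
  then have "b > 0" "d > 0" by (auto intro: gr0I)
  define i1 i2 j1 j2 where "i1 = i div b" "i2 = i mod b" "j1 = j div d" "j2 = j mod d"
  have ij: "i = i1 * b + i2" "j = j1 * d + j2" unfolding i1_i2_j1_j2_def by simp_all
  have lt: "i1 < a" "i2 < b" "j1 < c" "j2 < d"
    using ia jc \<open>b > 0\<close> \<open>d > 0\<close> unfolding i1_i2_j1_j2_def by (simp_all add: less_mult_imp_div_less)
  have "(kron A B * kron C D) $$ (i, j) = (\<Sum>k\<in>{0..<a' * b'}. kron A B $$ (i, k) * kron C D $$ (k, j))"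
    by (rule index_mult_mat_sum) (use A B C D ia jc in auto)
  also have "\<dots> = (\<Sum>k1\<in>{0..<a'}. \<Sum>k2\<in>{0..<b'}.
      (A $$ (i1, k1) * C $$ (k1, j1)) * (B $$ (i2, k2) * D $$ (k2, j2)))"
    unfolding sum_atLeast0_mult_nested ij
  proof (intro sum.cong refl)
    fix k1 k2 assume "k1 \<in> {0..<a'}" "k2 \<in> {0..<b'}"
    then have "k1 < a'" "k2 < b'" by simp_all
    then show "kron A B $$ (i1 * b + i2, k1 * b' + k2) * kron C D $$ (k1 * b' + k2, j1 * d + j2)
      = (A $$ (i1, k1) * C $$ (k1, j1)) * (B $$ (i2, k2) * D $$ (k2, j2))"
      using kron_index_block[of i1 A i2 B k1 k2] kron_index_block[of k1 C k2 D j1 j2] lt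
      by (simp only: dims mult_ac)
  qed
  also have "\<dots> = (\<Sum>k1\<in>{0..<a'}. A $$ (i1, k1) * C $$ (k1, j1))
      * (\<Sum>k2\<in>{0..<b'}. B $$ (i2, k2) * D $$ (k2, j2))"
    by (rule sum_product[symmetric])
  also have "\<dots> = kron (A * C) (B * D) $$ (i, j)"
    using kron_index_block[of i1 "A * C" i2 "B * D" j1 j2] lt
    unfolding ij index_mult_mat_sum[OF A C lt(1,3)] index_mult_mat_sum[OF B D lt(2,4)]
    by (simp only: dims)
  finally show "(kron A B * kron C D) $$ (i, j) = kron (A * C) (B * D) $$ (i, j)" .
qed (use A B C D in simp_all)

lemma kron_add_left:
  assumes "dim_row A = dim_row B" "dim_col A = dim_col B"
  shows "kron (A + B) C = kron A C + kron B C"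
proof (rule eq_matI)
  fix i j assume "i < dim_row (kron A C + kron B C)" "j < dim_col (kron A C + kron B C)"
  then have ij: "i < dim_row B * dim_row C" "j < dim_col B * dim_col C" using assms by simp_all
  then have q: "i div dim_row C < dim_row B" "j div dim_col C < dim_col B"
    by (simp_all add: less_mult_imp_div_less)
  show "kron (A + B) C $$ (i, j) = (kron A C + kron B C) $$ (i, j)"
    using ij q assms by (simp only: kron_index kron_dims index_add_mat distrib_right)
qed (use assms in simp_all)

lemma kron_add_right:
  assumes "dim_row B = dim_row C" "dim_col B = dim_col C"
  shows "kron A (B + C) = kron A B + kron A C"
proof (rule eq_matI)
  fix i j assume "i < dim_row (kron A B + kron A C)" "j < dim_col (kron A B + kron A C)"
  then have ij: "i < dim_row A * dim_row C" "j < dim_col A * dim_col C" using assms by simp_all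
  then have "dim_row C > 0" "dim_col C > 0" by (auto intro: gr0I)
  then have q: "i mod dim_row C < dim_row C" "j mod dim_col C < dim_col C" by simp_all
  show "kron A (B + C) $$ (i, j) = (kron A B + kron A C) $$ (i, j)"
    using ij q assms by (simp only: kron_index kron_dims index_add_mat distrib_left)
qed (use assms in simp_all)

lemma kron_one: "kron (1\<^sub>m a) (1\<^sub>m b) = (1\<^sub>m (a * b) :: bit mat)"
proof (rule eq_matI)
  fix i j assume "i < dim_row (1\<^sub>m (a * b) :: bit mat)" "j < dim_col (1\<^sub>m (a * b) :: bit mat)"
  then have ij: "i < a * b" "j < a * b" by auto
  then have "b > 0" by (auto intro: gr0I)
  then have q: "i div b < a" "j div b < a" "i mod b < b" "j mod b < b"
    using ij by (simp_all add: less_mult_imp_div_less)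
  have e: "(i div b = j div b \<and> i mod b = j mod b) \<longleftrightarrow> i = j"
    by (metis div_mult_mod_eq)
  have "kron (1\<^sub>m a) (1\<^sub>m b) $$ (i, j)
      = (1\<^sub>m a :: bit mat) $$ (i div b, j div b) * (1\<^sub>m b :: bit mat) $$ (i mod b, j mod b)"
    using kron_index[of i "1\<^sub>m a" "1\<^sub>m b" j] ij by (simp only: index_one_mat(2,3))
  also have "\<dots> = (if i = j then 1 else 0)"
    using q e by (simp only: index_one_mat(1)) auto
  finally show "kron (1\<^sub>m a) (1\<^sub>m b) $$ (i, j) = (1\<^sub>m (a * b) :: bit mat) $$ (i, j)"
    using ij by simp
qed auto

lemma kron_assoc: "kron (kron A B) C = kron A (kron B C)"
proof (rule eq_matI)
  define b c b' c' where "b = dim_row B" "c = dim_row C" "b' = dim_col B" "c' = dim_col C"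
  note dims = b_c_b'_c'_def[symmetric]
  have div_mod_nested: "k div (n * m) = k div m div n" "(k mod (n * m)) div m = k div m mod n"
    "(k mod (n * m)) mod m = k mod m" if "m > 0" for k n m :: nat
  proof -
    have "k mod (n * m) = m * (k div m mod n) + k mod m" by (metis mod_mult2_eq mult.commute)
    then show "(k mod (n * m)) div m = k div m mod n" "(k mod (n * m)) mod m = k mod m"
      using that by simp_all
  qed (metis div_mult2_eq mult.commute)
  fix i j assume "i < dim_row (kron A (kron B C))" and "j < dim_col (kron A (kron B C))"
  then have ii: "i < dim_row A * (b * c)" and jj: "j < dim_col A * (b' * c')" by (simp_all add: dims)
  then have "c > 0" "c' > 0" "b > 0" "b' > 0" by (auto intro: gr0I)
  note dmi = div_mod_nested[OF this(1), of i b] and dmj = div_mod_nested[OF this(2), of j b']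
  have lt: "i div c < dim_row A * b" "j div c' < dim_col A * b'"
    "i mod (b * c) < b * c" "j mod (b' * c') < b' * c'"
    using ii jj \<open>b > 0\<close> \<open>b' > 0\<close> \<open>c > 0\<close> \<open>c' > 0\<close>
    by (simp_all add: less_mult_imp_div_less mult.assoc)
  have "kron (kron A B) C $$ (i, j) = kron A B $$ (i div c, j div c') * C $$ (i mod c, j mod c')"
    using kron_index[of i "kron A B" C j] ii jj by (simp only: kron_dims dims mult.assoc)
  also have "\<dots> = (A $$ (i div c div b, j div c' div b') * B $$ (i div c mod b, j div c' mod b'))
      * C $$ (i mod c, j mod c')"
    using kron_index[of "i div c" A B "j div c'"] lt by (simp only: dims)
  also have "\<dots> = A $$ (i div (b * c), j div (b' * c'))
      * (B $$ ((i mod (b * c)) div c, (j mod (b' * c')) div c')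
         * C $$ ((i mod (b * c)) mod c, (j mod (b' * c')) mod c'))"
    by (simp only: dmi dmj mult.assoc)
  also have "\<dots> = kron A (kron B C) $$ (i, j)"
    using kron_index[of "i mod (b * c)" B C "j mod (b' * c')"] kron_index[of i A "kron B C" j] lt ii jj
    by (simp only: kron_dims dims)
  finally show "kron (kron A B) C $$ (i, j) = kron A (kron B C) $$ (i, j)" .
qed (simp_all add: mult.assoc)

lemma mat_dsum_dims [simp]:
  "dim_row (mat_dsum A B) = dim_row A + dim_row B" "dim_col (mat_dsum A B) = dim_col A + dim_col B"
  unfolding mat_dsum_def by simp_all

lemma mat_dsum_index:
  "i < dim_row A + dim_row B \<Longrightarrow> j < dim_col A + dim_col B \<Longrightarrow> mat_dsum A B $$ (i, j)
   = (if i < dim_row A then if j < dim_col A then A $$ (i, j) else 0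
      else if j < dim_col A then 0 else B $$ (i - dim_row A, j - dim_col A))"
  unfolding mat_dsum_def by (subst index_mat_four_block(1)) auto

lemma mat_dsum_carrier [simp]:
  "A \<in> carrier_mat a a \<Longrightarrow> B \<in> carrier_mat b b \<Longrightarrow> mat_dsum A B \<in> carrier_mat (a + b) (a + b)"
  by (intro carrier_matI) (simp_all only: mat_dsum_dims carrier_matD)

lemma mat_dsum_add:
  assumes "A \<in> carrier_mat a a" "C \<in> carrier_mat a a" "B \<in> carrier_mat b b" "D \<in> carrier_mat b b"
  shows "mat_dsum (A + C) (B + D) = mat_dsum A B + mat_dsum C D"
  using assms unfolding mat_dsum_def by (subst add_four_block_mat) auto

lemma mat_dsum_mult:
  assumes A: "A \<in> carrier_mat a a" and C: "C \<in> carrier_mat a a"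
    and B: "B \<in> carrier_mat b b" and D: "D \<in> carrier_mat b b"
  shows "mat_dsum A B * mat_dsum C D = mat_dsum (A * C) (B * D)"
proof -
  have "mat_dsum A B * mat_dsum C D = four_block_mat (A * C + 0\<^sub>m a b * 0\<^sub>m b a)
    (A * 0\<^sub>m a b + 0\<^sub>m a b * D) (0\<^sub>m b a * C + B * 0\<^sub>m b a) (0\<^sub>m b a * 0\<^sub>m a b + B * D)"
    using assms unfolding mat_dsum_def by (subst mult_four_block_mat) auto
  also have "\<dots> = mat_dsum (A * C) (B * D)"
    unfolding mat_dsum_def using assms by simp
  finally show ?thesis .
qed

lemma mat_dsum_one: "mat_dsum (1\<^sub>m a) (1\<^sub>m b) = (1\<^sub>m (a + b) :: bit mat)"
  unfolding mat_dsum_def by simp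

lemma mat_dsum_assoc: "mat_dsum (mat_dsum A B) C = mat_dsum A (mat_dsum B C)"
  unfolding mat_dsum_def by (rule assoc_four_block_mat[symmetric])

lemma mat_dsum_empty_left: "A \<in> carrier_mat n n \<Longrightarrow> mat_dsum (0\<^sub>m 0 0) A = A"
  by (rule eq_matI) (auto simp: mat_dsum_index)

lemma mat_dsum_empty_right: "A \<in> carrier_mat n n \<Longrightarrow> mat_dsum A (0\<^sub>m 0 0) = A"
  by (rule eq_matI) (auto simp: mat_dsum_index)

lemma kron_mat_dsum_left:
  assumes A: "A \<in> carrier_mat a a" and B: "B \<in> carrier_mat b b" and C: "C \<in> carrier_mat c c"
  shows "kron (mat_dsum A B) C = mat_dsum (kron A C) (kron B C)"
proof (rule eq_matI)
  have d: "dim_row A = a" "dim_col A = a" "dim_row B = b" "dim_col B = b" "dim_row C = c" "dim_col C = c"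
    using assms by auto
  fix i j assume "i < dim_row (mat_dsum (kron A C) (kron B C))" "j < dim_col (mat_dsum (kron A C) (kron B C))"
  then have ij: "i < a * c + b * c" "j < a * c + b * c" by (simp_all add: d)
  then have c0: "c > 0" by (auto intro: gr0I)
  have ij2: "i < (a + b) * c" "j < (a + b) * c" using ij by (simp_all add: distrib_right)
  have lhs: "kron (mat_dsum A B) C $$ (i, j) = mat_dsum A B $$ (i div c, j div c) * C $$ (i mod c, j mod c)"
    using kron_index[of i "mat_dsum A B" C j] ij2 by (simp only: d mat_dsum_dims)
  have qi: "i div c < a + b" "j div c < a + b" using ij2 by (simp_all add: less_mult_imp_div_less)
  have ia: "i < a * c \<longleftrightarrow> i div c < a" "j < a * c \<longleftrightarrow> j div c < a"
    using c0 by (simp_all add: div_less_iff_less_mult)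
  show "kron (mat_dsum A B) C $$ (i, j) = mat_dsum (kron A C) (kron B C) $$ (i, j)"
  proof (cases "i < a * c"; cases "j < a * c")
    assume "i < a * c" "j < a * c"
    then show ?thesis using ia lhs qi kron_index[of i A C j] by (simp add: d mat_dsum_index)
  next
    assume "i < a * c" "\<not> j < a * c"
    then show ?thesis using ia lhs qi ij c0 by (simp add: d mat_dsum_index)
  next
    assume "\<not> i < a * c" "j < a * c"
    then show ?thesis using ia lhs qi ij c0 by (simp add: d mat_dsum_index)
  next
    assume False: "\<not> i < a * c" "\<not> j < a * c"
    have shift: "(k - a * c) div c = k div c - a" "(k - a * c) mod c = k mod c" if "a * c \<le> k" for k
    proof -
      from le_Suc_ex[OF that] obtain l where k: "k = a * c + l" ..
      show "(k - a * c) div c = k div c - a" "(k - a * c) mod c = k mod c"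
        unfolding k using c0 by simp_all
    qed
    have lt: "i - a * c < b * c" "j - a * c < b * c" using ij False by linarith+
    have "mat_dsum (kron A C) (kron B C) $$ (i, j) = kron B C $$ (i - a * c, j - a * c)"
      using False ij by (simp add: d mat_dsum_index)
    also have "\<dots> = B $$ (i div c - a, j div c - a) * C $$ (i mod c, j mod c)"
      using kron_index[of "i - a * c" B C "j - a * c"] lt shift[of i] shift[of j] False
      by (simp only: d not_less)
    also have "\<dots> = mat_dsum A B $$ (i div c, j div c) * C $$ (i mod c, j mod c)"
      using qi ia False by (simp add: mat_dsum_index d)
    finally show ?thesis using lhs by simp
  qed
qed (use assms in \<open>auto simp: distrib_right\<close>)

definition swap_mat :: "nat \<Rightarrow> nat \<Rightarrow> bit mat" where
  "swap_mat a b = four_block_mat (0\<^sub>m b a) (1\<^sub>m b) (1\<^sub>m a) (0\<^sub>m a b)"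

lemma swap_mat_carrier: "swap_mat a b \<in> carrier_mat (b + a) (a + b)"
  unfolding swap_mat_def by (rule four_block_carrier_mat) auto

lemma swap_mat_inverse: "swap_mat a b * swap_mat b a = 1\<^sub>m (b + a)"
proof -
  have "swap_mat a b * swap_mat b a = four_block_mat (0\<^sub>m b a * 0\<^sub>m a b + 1\<^sub>m b * 1\<^sub>m b)
     (0\<^sub>m b a * 1\<^sub>m a + 1\<^sub>m b * 0\<^sub>m b a) (1\<^sub>m a * 0\<^sub>m a b + 0\<^sub>m a b * 1\<^sub>m b) (1\<^sub>m a * 1\<^sub>m a + 0\<^sub>m a b * 0\<^sub>m b a)"
    unfolding swap_mat_def by (rule mult_four_block_mat) auto
  also have "\<dots> = 1\<^sub>m (b + a)" by simp
  finally show ?thesis .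
qed

lemma swap_mat_conj_mat_dsum:
  assumes X: "X \<in> carrier_mat a a" and Y: "Y \<in> carrier_mat b b"
  shows "swap_mat a b * mat_dsum X Y = mat_dsum Y X * swap_mat a b"
proof -
  have d: "dim_row X = a" "dim_col X = a" "dim_row Y = b" "dim_col Y = b" using X Y by auto
  have "swap_mat a b * mat_dsum X Y = four_block_mat (0\<^sub>m b a * X + 1\<^sub>m b * 0\<^sub>m b a)
     (0\<^sub>m b a * 0\<^sub>m a b + 1\<^sub>m b * Y) (1\<^sub>m a * X + 0\<^sub>m a b * 0\<^sub>m b a) (1\<^sub>m a * 0\<^sub>m a b + 0\<^sub>m a b * Y)"
    unfolding swap_mat_def mat_dsum_def d by (rule mult_four_block_mat) (use X Y in auto)
  also have "\<dots> = four_block_mat (Y * 0\<^sub>m b a + 0\<^sub>m b a * 1\<^sub>m a) (Y * 1\<^sub>m b + 0\<^sub>m b a * 0\<^sub>m a b)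
     (0\<^sub>m a b * 0\<^sub>m b a + X * 1\<^sub>m a) (0\<^sub>m a b * 1\<^sub>m b + X * 0\<^sub>m a b)"
    using X Y by simp
  also have "\<dots> = mat_dsum Y X * swap_mat a b"
    unfolding swap_mat_def mat_dsum_def d by (rule mult_four_block_mat[symmetric]) (use X Y in auto)
  finally show ?thesis .
qed

lemma similar_mat_wit_add:
  assumes AB: "similar_mat_wit A B P Q" and CD: "similar_mat_wit C D P Q"
  shows "similar_mat_wit (A + C) (B + D) P Q"
proof -
  define n where "n = dim_row A"
  note ab = similar_mat_witD[OF n_def AB] and cd = similar_mat_witD[OF refl CD]
  have "dim_row C = n" using carrier_matD(1)[OF cd(6), symmetric] carrier_matD(1)[OF ab(6)] by (rule trans)
  then have C: "C \<in> carrier_mat n n" and D: "D \<in> carrier_mat n n" using cd(4,5) by (simp_all only:)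
  have "A + C = P * B * Q + P * D * Q" by (simp only: ab(3) cd(3))
  also have "\<dots> = (P * B + P * D) * Q"
    using ab(5,6,7) D by (intro add_mult_distrib_mat[symmetric]) auto
  also have "\<dots> = P * (B + D) * Q"
    by (simp only: mult_add_distrib_mat[OF ab(6,5) D])
  finally have eq: "A + C = P * (B + D) * Q" .
  show ?thesis
    by (rule similar_mat_witI[of _ _ n])
      (fact ab(1,2,6,7) eq add_carrier_mat[OF C] add_carrier_mat[OF D])+
qed

lemma similar_mat_wit_one_mat:
  assumes "similar_mat_wit A B P Q"
  shows "similar_mat_wit (1\<^sub>m (dim_row A)) (1\<^sub>m (dim_row A)) P Q"
proof -
  define n where "n = dim_row A"
  note ab = similar_mat_witD[OF n_def assms]
  have "P * 1\<^sub>m n * Q = 1\<^sub>m n" using ab(1,6) by simp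
  then show ?thesis
    unfolding n_def[symmetric] using ab by (intro similar_mat_witI[of _ _ n]) simp_all
qed

lemma similar_mat_wit_kron:
  assumes AB: "similar_mat_wit A B P Q" and CD: "similar_mat_wit C D R S"
  shows "similar_mat_wit (kron A C) (kron B D) (kron P R) (kron Q S)"
proof -
  define n m where "n = dim_row A" "m = dim_row C"
  note ab = similar_mat_witD[OF n_m_def(1) AB] and cd = similar_mat_witD[OF n_m_def(2) CD]
  have "kron A C = kron (P * B * Q) (R * D * S)" by (simp only: ab(3) cd(3))
  also have "\<dots> = kron (P * B) (R * D) * kron Q S"
    by (rule kron_mult[symmetric]) (use ab cd in auto)
  also have "\<dots> = kron P R * kron B D * kron Q S"
    unfolding kron_mult[OF ab(6) cd(6) ab(5) cd(5)] by (rule refl)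
  finally have eq: "kron A C = kron P R * kron B D * kron Q S" .
  show ?thesis
  proof (rule similar_mat_witI[of _ _ "n * m"])
    show "kron P R * kron Q S = 1\<^sub>m (n * m)" "kron Q S * kron P R = 1\<^sub>m (n * m)"
      by (simp_all only: kron_mult[OF ab(6) cd(6) ab(7) cd(7)] kron_mult[OF ab(7) cd(7) ab(6) cd(6)]
         ab(1,2) cd(1,2) kron_one)
  qed (fact eq kron_carrier[OF ab(4) cd(4)] kron_carrier[OF ab(5) cd(5)]
         kron_carrier[OF ab(6) cd(6)] kron_carrier[OF ab(7) cd(7)])+
qed

lemma similar_mat_wit_mat_dsum:
  assumes AB: "similar_mat_wit A B P Q" and CD: "similar_mat_wit C D R S"
  shows "similar_mat_wit (mat_dsum A C) (mat_dsum B D) (mat_dsum P R) (mat_dsum Q S)"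
proof -
  define n m where "n = dim_row A" "m = dim_row C"
  note ab = similar_mat_witD[OF n_m_def(1) AB] and cd = similar_mat_witD[OF n_m_def(2) CD]
  have "mat_dsum A C = mat_dsum (P * B * Q) (R * D * S)" by (simp only: ab(3) cd(3))
  also have "\<dots> = mat_dsum (P * B) (R * D) * mat_dsum Q S"
    by (rule mat_dsum_mult[symmetric]) (use ab cd in auto)
  also have "\<dots> = mat_dsum P R * mat_dsum B D * mat_dsum Q S"
    unfolding mat_dsum_mult[OF ab(6) ab(5) cd(6) cd(5)] by (rule refl)
  finally have eq: "mat_dsum A C = mat_dsum P R * mat_dsum B D * mat_dsum Q S" .
  show ?thesis
  proof (rule similar_mat_witI[of _ _ "n + m"])
    show "mat_dsum P R * mat_dsum Q S = 1\<^sub>m (n + m)" "mat_dsum Q S * mat_dsum P R = 1\<^sub>m (n + m)"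
      by (simp_all only: mat_dsum_mult[OF ab(6) ab(7) cd(6) cd(7)] mat_dsum_mult[OF ab(7) ab(6) cd(7) cd(6)]
         ab(1,2) cd(1,2) mat_dsum_one)
  qed (fact eq mat_dsum_carrier[OF ab(4) cd(4)] mat_dsum_carrier[OF ab(5) cd(5)]
         mat_dsum_carrier[OF ab(6) cd(6)] mat_dsum_carrier[OF ab(7) cd(7)])+
qed

lemma similar_mat_wit_mat_dsum_swap:
  assumes X: "X \<in> carrier_mat a a" and Y: "Y \<in> carrier_mat b b"
  shows "similar_mat_wit (mat_dsum Y X) (mat_dsum X Y) (swap_mat a b) (swap_mat b a)"
proof -
  have S: "swap_mat a b \<in> carrier_mat (b + a) (a + b)" "swap_mat b a \<in> carrier_mat (a + b) (b + a)"
    by (rule swap_mat_carrier)+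
  have YX: "mat_dsum Y X \<in> carrier_mat (b + a) (b + a)" using X Y by simp
  have "swap_mat a b * mat_dsum X Y * swap_mat b a = mat_dsum Y X * swap_mat a b * swap_mat b a"
    by (simp only: swap_mat_conj_mat_dsum[OF X Y])
  also have "\<dots> = mat_dsum Y X * (swap_mat a b * swap_mat b a)"
    by (rule assoc_mult_mat[OF YX S])
  also have "\<dots> = mat_dsum Y X"
    by (simp only: swap_mat_inverse right_mult_one_mat[OF YX])
  finally have eq: "mat_dsum Y X = swap_mat a b * mat_dsum X Y * swap_mat b a" ..
  have XY: "mat_dsum X Y \<in> carrier_mat (b + a) (b + a)" using X Y by (simp add: add.commute)
  have inv: "swap_mat b a * swap_mat a b = 1\<^sub>m (b + a)" using swap_mat_inverse[of b a] by (simp add: add.commute)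
  from S(2) have S2: "swap_mat b a \<in> carrier_mat (b + a) (b + a)" by (simp add: add.commute)
  from S(1) have S1: "swap_mat a b \<in> carrier_mat (b + a) (b + a)" by (simp add: add.commute)
  show ?thesis
    by (rule similar_mat_witI[of _ _ "b + a"]) (fact swap_mat_inverse inv eq YX XY S1 S2)+
qed

lemma similar_mat_wit_intertwines:
  assumes "similar_mat_wit A B P Q"
  shows "Q * A = B * Q"
proof -
  define n where "n = dim_row A"
  note ab = similar_mat_witD[OF n_def assms]
  have B: "B = Q * A * P" using similar_mat_witD(3)[OF refl similar_mat_wit_sym[OF assms]] .
  have "B * Q = Q * A * P * Q" by (simp only: B)
  also have "\<dots> = Q * A * (P * Q)" using ab by (intro assoc_mult_mat) auto
  also have "\<dots> = Q * A" using ab by (simp add: right_mult_one_mat)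
  finally show ?thesis ..
qed

section \<open>Modules as pairs of matrices\<close>

definition lmod_wf :: "lmod \<Rightarrow> bool" where
  "lmod_wf M \<longleftrightarrow> fst M \<in> carrier_mat (ldim M) (ldim M) \<and> snd M \<in> carrier_mat (ldim M) (ldim M)"

lemma ldim_lmod_sum [simp]: "ldim (lmod_sum M N) = ldim M + ldim N"
  by (simp add: ldim_def lmod_sum_def)

lemma fst_lmod_sum [simp]: "fst (lmod_sum M N) = mat_dsum (fst M) (fst N)"
  and snd_lmod_sum [simp]: "snd (lmod_sum M N) = mat_dsum (snd M) (snd N)"
  by (simp_all add: lmod_sum_def)

lemma lmod_wf_sum: "lmod_wf M \<Longrightarrow> lmod_wf N \<Longrightarrow> lmod_wf (lmod_sum M N)"
  unfolding lmod_wf_def by simp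

lemma ldim_lmod_tensor [simp]: "ldim (lmod_tensor M N) = ldim M * ldim N"
  by (simp add: ldim_def lmod_tensor_def Let_def)

lemma fst_lmod_tensor: "fst (lmod_tensor M N) = kron (fst M) (1\<^sub>m (ldim N)) + kron (1\<^sub>m (ldim M)) (fst N)"
  and snd_lmod_tensor: "snd (lmod_tensor M N) =
    kron (snd M) (1\<^sub>m (ldim N)) + kron (fst M) (fst N) + kron (1\<^sub>m (ldim M)) (snd N)"
  by (simp_all add: lmod_tensor_def Let_def)

lemma lmod_wf_tensor: "lmod_wf M \<Longrightarrow> lmod_wf N \<Longrightarrow> lmod_wf (lmod_tensor M N)"
  unfolding lmod_wf_def fst_lmod_tensor snd_lmod_tensor ldim_lmod_tensor
  by (intro conjI add_carrier_mat kron_carrier one_carrier_mat) auto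

lemma lmod_wf_zero: "lmod_wf lmod_zero" and ldim_lmod_zero [simp]: "ldim lmod_zero = 0"
  by (simp_all add: lmod_wf_def ldim_def lmod_zero_def)

lemma lmod_wf_unit: "lmod_wf lmod_unit" and ldim_lmod_unit [simp]: "ldim lmod_unit = 1"
  by (simp_all add: lmod_wf_def ldim_def lmod_unit_def)

lemma lmod_wf_copies: "lmod_wf M \<Longrightarrow> lmod_wf (lmod_copies k M)"
  by (induction k) (simp_all add: lmod_wf_zero lmod_wf_sum)

text \<open>Unlike \<open>lmod_iso\<close>, similarity also forces both actions to be square matrices of the common
  dimension, which makes it an equivalence relation.\<close>
definition lmod_similar :: "lmod \<Rightarrow> lmod \<Rightarrow> bool" where
  "lmod_similar M N \<longleftrightarrow>
     (\<exists>P Q. similar_mat_wit (fst M) (fst N) P Q \<and> similar_mat_wit (snd M) (snd N) P Q)"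

lemma lmod_similarD:
  assumes "lmod_similar M N"
  shows "lmod_wf M" "lmod_wf N" "ldim N = ldim M"
proof -
  obtain P Q where f: "similar_mat_wit (fst M) (fst N) P Q" and s: "similar_mat_wit (snd M) (snd N) P Q"
    using assms unfolding lmod_similar_def by blast
  note sf = similar_mat_witD[OF ldim_def f] and ss = similar_mat_witD[OF refl s]
  have snd_dim: "dim_row (snd M) = ldim M"
    using carrier_matD(1)[OF ss(6), symmetric] carrier_matD(1)[OF sf(6)] by (rule trans)
  show "ldim N = ldim M" using carrier_matD(1)[OF sf(5)] by (simp only: ldim_def)
  then show "lmod_wf M" "lmod_wf N"
    using sf(4,5) ss(4,5) unfolding lmod_wf_def by (simp_all only: snd_dim)
qed

lemma lmod_similar_refl: "lmod_wf M \<Longrightarrow> lmod_similar M M"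
  unfolding lmod_wf_def lmod_similar_def by (blast intro: similar_mat_wit_refl)

lemma lmod_similar_sym: "lmod_similar M N \<Longrightarrow> lmod_similar N M"
  unfolding lmod_similar_def by (blast intro: similar_mat_wit_sym)

lemma lmod_similar_trans [trans]: "lmod_similar M N \<Longrightarrow> lmod_similar N K \<Longrightarrow> lmod_similar M K"
  unfolding lmod_similar_def by (blast intro: similar_mat_wit_trans)

lemma lmod_similar_imp_iso:
  assumes "lmod_similar M N"
  shows "lmod_iso M N"
proof -
  obtain P Q where f: "similar_mat_wit (fst M) (fst N) P Q" and s: "similar_mat_wit (snd M) (snd N) P Q"
    using assms unfolding lmod_similar_def by blast
  note sf = similar_mat_witD[OF ldim_def f]
  have inv: "invertible_mat Q"
    using sf(1,2,6,7) unfolding invertible_mat_def inverts_mat_def by (intro conjI exI[of _ P]) auto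
  show ?thesis
    unfolding lmod_iso_def lmod_similarD(3)[OF assms]
    by (intro conjI exI[of _ Q] refl) (fact sf(7) inv similar_mat_wit_intertwines[OF f]
      similar_mat_wit_intertwines[OF s])+
qed

lemma lmod_similarI:
  assumes "lmod_wf M" "lmod_wf N" "ldim M = n" "ldim N = n"
    and PQ: "P \<in> carrier_mat n n" "Q \<in> carrier_mat n n" "P * Q = 1\<^sub>m n" "Q * P = 1\<^sub>m n"
    and "fst M * P = P * fst N" "snd M * P = P * snd N"
  shows "lmod_similar M N"
proof -
  have conj: "A = P * B * Q" if "A \<in> carrier_mat n n" "A * P = P * B" for A B
  proof -
    have "A = A * (P * Q)" using that(1) PQ(3) by simp
    also have "\<dots> = A * P * Q" using that(1) PQ(1,2) by (simp add: assoc_mult_mat)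
    finally show ?thesis by (simp only: that(2))
  qed
  show ?thesis
    unfolding lmod_similar_def using assms conj
    by (intro exI[of _ P] exI[of _ Q] conjI similar_mat_witI[of _ _ n]) (auto simp: lmod_wf_def)
qed

lemma lmod_similar_sum:
  assumes "lmod_similar A A'" "lmod_similar B B'"
  shows "lmod_similar (lmod_sum A B) (lmod_sum A' B')"
  using assms unfolding lmod_similar_def by (auto intro: similar_mat_wit_mat_dsum)

lemma lmod_similar_sum_comm:
  assumes "lmod_wf A" "lmod_wf B"
  shows "lmod_similar (lmod_sum A B) (lmod_sum B A)"
  using assms unfolding lmod_wf_def lmod_similar_def by (auto intro: similar_mat_wit_mat_dsum_swap)

lemma lmod_similar_tensor:
  assumes "lmod_similar A A'" "lmod_similar X X'"
  shows "lmod_similar (lmod_tensor A X) (lmod_tensor A' X')"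
proof -
  obtain P Q where fA: "similar_mat_wit (fst A) (fst A') P Q" and sA: "similar_mat_wit (snd A) (snd A') P Q"
    using assms(1) unfolding lmod_similar_def by blast
  obtain R S where fX: "similar_mat_wit (fst X) (fst X') R S" and sX: "similar_mat_wit (snd X) (snd X') R S"
    using assms(2) unfolding lmod_similar_def by blast
  have oneA: "similar_mat_wit (1\<^sub>m (ldim A)) (1\<^sub>m (ldim A)) P Q"
    and oneX: "similar_mat_wit (1\<^sub>m (ldim X)) (1\<^sub>m (ldim X)) R S"
    unfolding ldim_def by (rule similar_mat_wit_one_mat[OF fA], rule similar_mat_wit_one_mat[OF fX])
  have "similar_mat_wit (fst (lmod_tensor A X)) (fst (lmod_tensor A' X')) (kron P R) (kron Q S)"
    unfolding fst_lmod_tensor lmod_similarD(3)[OF assms(1)] lmod_similarD(3)[OF assms(2)]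
    by (intro similar_mat_wit_add similar_mat_wit_kron fA fX oneA oneX)
  moreover have "similar_mat_wit (snd (lmod_tensor A X)) (snd (lmod_tensor A' X')) (kron P R) (kron Q S)"
    unfolding snd_lmod_tensor lmod_similarD(3)[OF assms(1)] lmod_similarD(3)[OF assms(2)]
    by (intro similar_mat_wit_add similar_mat_wit_kron fA sA fX sX oneA oneX)
  ultimately show ?thesis unfolding lmod_similar_def by blast
qed

lemma lmod_sum_assoc: "lmod_sum (lmod_sum A B) C = lmod_sum A (lmod_sum B C)"
  by (simp add: lmod_sum_def mat_dsum_assoc)

lemma lmod_sum_zero_left: "lmod_wf A \<Longrightarrow> lmod_sum lmod_zero A = A"
  unfolding lmod_wf_def lmod_zero_def lmod_sum_def by (auto simp: mat_dsum_empty_left)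

lemma lmod_sum_zero_right: "lmod_wf A \<Longrightarrow> lmod_sum A lmod_zero = A"
  unfolding lmod_wf_def lmod_zero_def lmod_sum_def by (auto simp: mat_dsum_empty_right)

lemma lmod_tensor_sum_left:
  assumes "lmod_wf A" "lmod_wf B" "lmod_wf X"
  shows "lmod_tensor (lmod_sum A B) X = lmod_sum (lmod_tensor A X) (lmod_tensor B X)"
proof -
  define a b x where "a = ldim A" "b = ldim B" "x = ldim X"
  have c: "fst A \<in> carrier_mat a a" "snd A \<in> carrier_mat a a" "fst B \<in> carrier_mat b b"
    "snd B \<in> carrier_mat b b" "fst X \<in> carrier_mat x x" "snd X \<in> carrier_mat x x"
    using assms a_b_x_def by (auto simp: lmod_wf_def)
  have o: "1\<^sub>m a \<in> carrier_mat a a" "1\<^sub>m b \<in> carrier_mat b b" "1\<^sub>m x \<in> carrier_mat x x" by auto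
  have one: "(1\<^sub>m (ldim (lmod_sum A B)) :: bit mat) = mat_dsum (1\<^sub>m a) (1\<^sub>m b)"
    by (simp add: a_b_x_def mat_dsum_one)
  have "fst (lmod_tensor (lmod_sum A B) X)
      = kron (mat_dsum (fst A) (fst B)) (1\<^sub>m x) + kron (mat_dsum (1\<^sub>m a) (1\<^sub>m b)) (fst X)"
    unfolding fst_lmod_tensor one by (simp add: a_b_x_def)
  also have "\<dots> = mat_dsum (kron (fst A) (1\<^sub>m x)) (kron (fst B) (1\<^sub>m x))
      + mat_dsum (kron (1\<^sub>m a) (fst X)) (kron (1\<^sub>m b) (fst X))"
    by (simp only: kron_mat_dsum_left[OF c(1) c(3) o(3)] kron_mat_dsum_left[OF o(1) o(2) c(5)])
  also have "\<dots> = fst (lmod_sum (lmod_tensor A X) (lmod_tensor B X))"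
    unfolding fst_lmod_sum fst_lmod_tensor a_b_x_def[symmetric]
    by (rule mat_dsum_add[symmetric]) (use c o in auto)
  finally have "fst (lmod_tensor (lmod_sum A B) X) = fst (lmod_sum (lmod_tensor A X) (lmod_tensor B X))" .
  moreover have "snd (lmod_tensor (lmod_sum A B) X) = kron (mat_dsum (snd A) (snd B)) (1\<^sub>m x)
      + kron (mat_dsum (fst A) (fst B)) (fst X) + kron (mat_dsum (1\<^sub>m a) (1\<^sub>m b)) (snd X)"
    unfolding snd_lmod_tensor one by (simp add: a_b_x_def)
  moreover have "\<dots> = mat_dsum (kron (snd A) (1\<^sub>m x)) (kron (snd B) (1\<^sub>m x))
      + mat_dsum (kron (fst A) (fst X)) (kron (fst B) (fst X))
      + mat_dsum (kron (1\<^sub>m a) (snd X)) (kron (1\<^sub>m b) (snd X))"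
    by (simp only: kron_mat_dsum_left[OF c(2) c(4) o(3)] kron_mat_dsum_left[OF c(1) c(3) c(5)]
        kron_mat_dsum_left[OF o(1) o(2) c(6)])
  moreover have "\<dots> = mat_dsum (kron (snd A) (1\<^sub>m x) + kron (fst A) (fst X))
      (kron (snd B) (1\<^sub>m x) + kron (fst B) (fst X))
      + mat_dsum (kron (1\<^sub>m a) (snd X)) (kron (1\<^sub>m b) (snd X))"
    by (subst mat_dsum_add[symmetric]) (use c o in auto)
  moreover have "\<dots> = snd (lmod_sum (lmod_tensor A X) (lmod_tensor B X))"
    unfolding snd_lmod_sum snd_lmod_tensor a_b_x_def[symmetric]
    by (rule mat_dsum_add[symmetric]) (use c o in auto)
  ultimately show ?thesis by (simp add: prod_eq_iff)
qed

lemma lmod_tensor_zero_left: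
  assumes "lmod_wf X"
  shows "lmod_tensor lmod_zero X = lmod_zero"
proof -
  have empty: "A = 0\<^sub>m 0 0" if "A \<in> carrier_mat 0 0" for A :: "bit mat"
    using that by (intro eq_matI) auto
  have "fst (lmod_tensor lmod_zero X) \<in> carrier_mat 0 0" "snd (lmod_tensor lmod_zero X) \<in> carrier_mat 0 0"
    using assms unfolding fst_lmod_tensor snd_lmod_tensor ldim_lmod_zero lmod_wf_def
    by (auto simp: lmod_zero_def intro!: add_carrier_mat kron_carrier)
  then show ?thesis by (simp add: prod_eq_iff empty lmod_zero_def)
qed

lemma kron_one_mat_1_right: "kron A (1\<^sub>m 1) = A"
  and kron_one_mat_1_left: "kron (1\<^sub>m 1) A = A"
  and kron_zero_mat_1_right: "kron A (0\<^sub>m 1 1) = 0\<^sub>m (dim_row A) (dim_col A)"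
  and kron_zero_mat_1_left: "kron (0\<^sub>m 1 1) A = 0\<^sub>m (dim_row A) (dim_col A)"
  by (rule eq_matI; simp add: kron_index)+

lemma lmod_tensor_unit_right: "lmod_wf X \<Longrightarrow> lmod_tensor X lmod_unit = X"
  and lmod_tensor_unit_left: "lmod_wf X \<Longrightarrow> lmod_tensor lmod_unit X = X"
proof -
  have unit: "fst lmod_unit = 0\<^sub>m 1 1" "snd lmod_unit = 0\<^sub>m 1 1" by (simp_all add: lmod_unit_def)
  show "lmod_wf X \<Longrightarrow> lmod_tensor X lmod_unit = X" "lmod_wf X \<Longrightarrow> lmod_tensor lmod_unit X = X"
    unfolding lmod_wf_def prod_eq_iff fst_lmod_tensor snd_lmod_tensor ldim_lmod_unit unit
      kron_one_mat_1_right kron_one_mat_1_left kron_zero_mat_1_right kron_zero_mat_1_left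
    by auto
qed

lemma lmod_tensor_assoc:
  assumes "lmod_wf X" "lmod_wf Y" "lmod_wf Z"
  shows "lmod_tensor (lmod_tensor X Y) Z = lmod_tensor X (lmod_tensor Y Z)"
proof -
  define x y z where "x = ldim X" "y = ldim Y" "z = ldim Z"
  have c: "fst X \<in> carrier_mat x x" "snd X \<in> carrier_mat x x" "fst Y \<in> carrier_mat y y"
    "snd Y \<in> carrier_mat y y" "fst Z \<in> carrier_mat z z" "snd Z \<in> carrier_mat z z"
    using assms x_y_z_def by (auto simp: lmod_wf_def)
  then have d: "dim_row (fst X) = x" "dim_col (fst X) = x" "dim_row (snd X) = x" "dim_col (snd X) = x"
    "dim_row (fst Y) = y" "dim_col (fst Y) = y" "dim_row (snd Y) = y" "dim_col (snd Y) = y"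
    "dim_row (fst Z) = z" "dim_col (fst Z) = z" "dim_row (snd Z) = z" "dim_col (snd Z) = z"
    by auto
  have l: "ldim (lmod_tensor X Y) = x * y" "ldim (lmod_tensor Y Z) = y * z"
    using x_y_z_def by simp_all
  have o: "1\<^sub>m x \<in> carrier_mat x x" "1\<^sub>m y \<in> carrier_mat y y" "1\<^sub>m z \<in> carrier_mat z z"
    "1\<^sub>m (y * z) \<in> carrier_mat (y * z) (y * z)" by auto
  note kc = kron_carrier[OF c(1) o(4)] kron_carrier[OF c(2) o(4)]
    kron_carrier[OF o(1) kron_carrier[OF c(3) o(3)]] kron_carrier[OF o(1) kron_carrier[OF o(2) c(5)]]
    kron_carrier[OF c(1) kron_carrier[OF c(3) o(3)]] kron_carrier[OF o(1) kron_carrier[OF c(4) o(3)]]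
    kron_carrier[OF c(1) kron_carrier[OF o(2) c(5)]] kron_carrier[OF o(1) kron_carrier[OF c(3) c(5)]]
    kron_carrier[OF o(1) kron_carrier[OF o(2) c(6)]]
  have o1: "(1\<^sub>m (x * y) :: bit mat) = kron (1\<^sub>m x) (1\<^sub>m y)"
    and o2: "kron (1\<^sub>m y) (1\<^sub>m z) = (1\<^sub>m (y * z) :: bit mat)" by (simp_all add: kron_one)
  have rearrange: "((t1 + t2 + t3) + (t4 + t5)) + t6 = (t1 + (t2 + t4)) + ((t3 + t5) + t6)"
    if "t1 \<in> carrier_mat n n" "t2 \<in> carrier_mat n n" "t3 \<in> carrier_mat n n"
      "t4 \<in> carrier_mat n n" "t5 \<in> carrier_mat n n" "t6 \<in> carrier_mat n n"
    for t1 t2 t3 t4 t5 t6 :: "bit mat" and n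
    using that by (intro eq_matI) (simp_all only: index_add_mat carrier_matD add_ac)
  note expand = kron_add_left kron_add_right kron_assoc o2 kron_dims index_add_mat(2,3)
    index_one_mat(2,3) d
  have "fst (lmod_tensor (lmod_tensor X Y) Z) = (kron (fst X) (1\<^sub>m (y * z))
      + kron (1\<^sub>m x) (kron (fst Y) (1\<^sub>m z))) + kron (1\<^sub>m x) (kron (1\<^sub>m y) (fst Z))"
    unfolding fst_lmod_tensor l x_y_z_def[symmetric] o1 by (simp only: expand)
  also have "\<dots> = fst (lmod_tensor X (lmod_tensor Y Z))"
    unfolding fst_lmod_tensor l x_y_z_def[symmetric] assoc_add_mat[OF kc(1) kc(3) kc(4)]
    by (simp only: expand)
  finally have fst_eq: "fst (lmod_tensor (lmod_tensor X Y) Z) = fst (lmod_tensor X (lmod_tensor Y Z))" .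
  have "snd (lmod_tensor (lmod_tensor X Y) Z) =
     ((kron (snd X) (1\<^sub>m (y * z)) + kron (fst X) (kron (fst Y) (1\<^sub>m z))
        + kron (1\<^sub>m x) (kron (snd Y) (1\<^sub>m z)))
      + (kron (fst X) (kron (1\<^sub>m y) (fst Z)) + kron (1\<^sub>m x) (kron (fst Y) (fst Z))))
      + kron (1\<^sub>m x) (kron (1\<^sub>m y) (snd Z))"
    unfolding fst_lmod_tensor snd_lmod_tensor l x_y_z_def[symmetric] o1 by (simp only: expand)
  also have "\<dots> = snd (lmod_tensor X (lmod_tensor Y Z))"
    unfolding fst_lmod_tensor snd_lmod_tensor l x_y_z_def[symmetric]
      rearrange[OF kc(2) kc(5) kc(6) kc(7) kc(8) kc(9)]
    by (simp only: expand)
  finally show ?thesis using fst_eq by (simp add: prod_eq_iff)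
qed

lemma lmod_copies_tensor:
  "lmod_wf X \<Longrightarrow> lmod_wf Y \<Longrightarrow> lmod_tensor (lmod_copies k X) Y = lmod_copies k (lmod_tensor X Y)"
  by (induction k) (simp_all add: lmod_tensor_zero_left lmod_tensor_sum_left lmod_wf_copies)

lemma lmod_similar_copies: "lmod_similar X Y \<Longrightarrow> lmod_similar (lmod_copies k X) (lmod_copies k Y)"
  by (induction k) (simp_all add: lmod_similar_sum lmod_similar_refl lmod_wf_zero)

lemma lmod_copies_add:
  "lmod_wf X \<Longrightarrow> lmod_copies (a + b) X = lmod_sum (lmod_copies a X) (lmod_copies b X)"
  by (induction a) (simp_all add: lmod_sum_zero_left lmod_sum_assoc lmod_wf_copies)

lemma lmod_copies_mult: "lmod_wf X \<Longrightarrow> lmod_copies a (lmod_copies b X) = lmod_copies (a * b) X"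
  by (induction a) (simp_all add: lmod_copies_add)

lemma lmod_similar_copies_sum:
  assumes "lmod_wf X" "lmod_wf Y"
  shows "lmod_similar (lmod_copies k (lmod_sum X Y)) (lmod_sum (lmod_copies k X) (lmod_copies k Y))"
proof (induction k)
  case 0
  show ?case using assms by (simp add: lmod_sum_zero_left lmod_wf_zero lmod_similar_refl)
next
  case (Suc k)
  let ?X = "lmod_copies k X" and ?Y = "lmod_copies k Y"
  have wf: "lmod_wf ?X" "lmod_wf ?Y" using assms by (simp_all add: lmod_wf_copies)
  have "lmod_similar (lmod_copies (Suc k) (lmod_sum X Y)) (lmod_sum (lmod_sum X Y) (lmod_sum ?X ?Y))"
    using Suc assms by (simp add: lmod_similar_sum lmod_similar_refl lmod_wf_sum)
  also have "lmod_sum (lmod_sum X Y) (lmod_sum ?X ?Y) = lmod_sum X (lmod_sum (lmod_sum Y ?X) ?Y)"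
    by (simp add: lmod_sum_assoc)
  also have "lmod_similar \<dots> (lmod_sum X (lmod_sum (lmod_sum ?X Y) ?Y))"
    using assms wf by (intro lmod_similar_sum lmod_similar_refl lmod_similar_sum_comm lmod_wf_sum)
  also have "lmod_sum X (lmod_sum (lmod_sum ?X Y) ?Y) = lmod_sum (lmod_copies (Suc k) X) (lmod_copies (Suc k) Y)"
    by (simp add: lmod_sum_assoc)
  finally show ?case .
qed

primrec lmod_tensor_pow :: "lmod \<Rightarrow> nat \<Rightarrow> lmod" where
  "lmod_tensor_pow X 0 = lmod_unit"
| "lmod_tensor_pow X (Suc k) = lmod_tensor X (lmod_tensor_pow X k)"

lemma lmod_wf_tensor_pow: "lmod_wf X \<Longrightarrow> lmod_wf (lmod_tensor_pow X k)"
  by (induction k) (simp_all add: lmod_wf_unit lmod_wf_tensor)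

lemma lmod_tensor_pow_Suc_right:
  assumes "lmod_wf X"
  shows "lmod_tensor_pow X (Suc k) = lmod_tensor (lmod_tensor_pow X k) X"
proof (induction k)
  case 0
  show ?case using assms by (simp add: lmod_tensor_unit_left lmod_tensor_unit_right)
next
  case (Suc k)
  then have "lmod_tensor_pow X (Suc (Suc k)) = lmod_tensor X (lmod_tensor (lmod_tensor_pow X k) X)"
    by simp
  also have "\<dots> = lmod_tensor (lmod_tensor_pow X (Suc k)) X"
    using assms by (simp add: lmod_tensor_assoc lmod_wf_tensor_pow)
  finally show ?case .
qed

lemma MJ_eq_tensor_pow: "finite J \<Longrightarrow> MJ J = lmod_tensor_pow (Mi 1) (card J)"
proof -
  have "foldr (\<lambda>j N. lmod_tensor (Mi j) N) xs lmod_unit = lmod_tensor_pow (Mi 1) (length xs)" for xs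
    by (induction xs) (simp_all add: Mi_def)
  then show "finite J \<Longrightarrow> MJ J = lmod_tensor_pow (Mi 1) (card J)"
    by (simp add: MJ_def)
qed

section \<open>The four explicit isomorphisms\<close>

text \<open>Explicit matrices are given by their lists of rows, so that products of concrete matrices
  can be evaluated by \<open>code_simp\<close>.\<close>
definition list_mat :: "nat \<Rightarrow> bit list list \<Rightarrow> bit mat" where
  "list_mat n L = mat n n (\<lambda>(i, j). L ! i ! j)"

definition list_tab :: "nat \<Rightarrow> (nat \<Rightarrow> nat \<Rightarrow> bit) \<Rightarrow> bit list list" where
  "list_tab n f = map (\<lambda>i. map (\<lambda>j. f i j) [0..<n]) [0..<n]"

definition list_mat_mult :: "nat \<Rightarrow> bit list list \<Rightarrow> bit list list \<Rightarrow> bit list list" where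
  "list_mat_mult n L K = list_tab n (\<lambda>i j. sum_list (map (\<lambda>k. L ! i ! k * K ! k ! j) [0..<n]))"

lemma list_mat_carrier: "list_mat n L \<in> carrier_mat n n"
  by (simp add: list_mat_def)

lemma list_mat_dims [simp]: "dim_row (list_mat n L) = n" "dim_col (list_mat n L) = n"
  by (simp_all add: list_mat_def)

lemma mat_eq_list_mat: "mat n n f = list_mat n (list_tab n (\<lambda>i j. f (i, j)))"
  by (rule eq_matI) (simp_all add: list_mat_def list_tab_def)

lemma list_mat_mult: "list_mat n L * list_mat n K = list_mat n (list_mat_mult n L K)"
proof (rule eq_matI)
  fix i j assume "i < dim_row (list_mat n (list_mat_mult n L K))" "j < dim_col (list_mat n (list_mat_mult n L K))"
  then have ij: "i < n" "j < n" by simp_all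
  have "(list_mat n L * list_mat n K) $$ (i, j) = (\<Sum>l\<in>{0..<n}. list_mat n L $$ (i, l) * list_mat n K $$ (l, j))"
    by (rule index_mult_mat_sum[OF list_mat_carrier list_mat_carrier ij])
  also have "\<dots> = (\<Sum>l\<in>{0..<n}. L ! i ! l * K ! l ! j)"
    by (rule sum.cong) (simp_all add: list_mat_def ij)
  also have "\<dots> = sum_list (map (\<lambda>l. L ! i ! l * K ! l ! j) [0..<n])"
    by (simp only: sum_set_upt_conv_sum_list_nat atLeastLessThan_upt)
  also have "\<dots> = list_mat n (list_mat_mult n L K) $$ (i, j)"
    using ij by (simp add: list_mat_def list_mat_mult_def list_tab_def)
  finally show "(list_mat n L * list_mat n K) $$ (i, j) = list_mat n (list_mat_mult n L K) $$ (i, j)" .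
qed simp_all

lemma list_mat_add: "list_mat n L + list_mat n K = list_mat n (list_tab n (\<lambda>i j. L ! i ! j + K ! i ! j))"
  by (rule eq_matI) (simp_all add: list_mat_def list_tab_def)

lemma kron_list_mat: "kron (list_mat a L) (list_mat b K)
  = list_mat (a * b) (list_tab (a * b) (\<lambda>i j. L ! (i div b) ! (j div b) * K ! (i mod b) ! (j mod b)))"
proof (rule eq_matI)
  fix i j assume "i < dim_row (list_mat (a * b) (list_tab (a * b)
      (\<lambda>i j. L ! (i div b) ! (j div b) * K ! (i mod b) ! (j mod b))))"
    "j < dim_col (list_mat (a * b) (list_tab (a * b)
      (\<lambda>i j. L ! (i div b) ! (j div b) * K ! (i mod b) ! (j mod b))))"
  then have ij: "i < a * b" "j < a * b" by simp_all
  then have "b > 0" by (auto intro: gr0I)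
  then have q: "i div b < a" "j div b < a" "i mod b < b" "j mod b < b"
    using ij by (simp_all add: less_mult_imp_div_less)
  have "kron (list_mat a L) (list_mat b K) $$ (i, j)
      = list_mat a L $$ (i div b, j div b) * list_mat b K $$ (i mod b, j mod b)"
    using kron_index[of i "list_mat a L" "list_mat b K" j] ij by (simp only: list_mat_dims)
  also have "\<dots> = L ! (i div b) ! (j div b) * K ! (i mod b) ! (j mod b)"
    using q by (simp only: list_mat_def index_mat(1) split)
  also have "\<dots> = list_mat (a * b) (list_tab (a * b)
      (\<lambda>i j. L ! (i div b) ! (j div b) * K ! (i mod b) ! (j mod b))) $$ (i, j)"
    using ij by (simp only: list_mat_def index_mat(1) split list_tab_def nth_map length_upt nth_upt
        add_0 diff_zero)
  finally show "kron (list_mat a L) (list_mat b K) $$ (i, j) = list_mat (a * b) (list_tab (a * b)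
      (\<lambda>i j. L ! (i div b) ! (j div b) * K ! (i mod b) ! (j mod b))) $$ (i, j)" .
qed simp_all

lemma mat_dsum_list_mat: "mat_dsum (list_mat a L) (list_mat b K) = list_mat (a + b) (list_tab (a + b)
  (\<lambda>i j. if i < a then (if j < a then L ! i ! j else 0) else (if j < a then 0 else K ! (i - a) ! (j - a))))"
  by (rule eq_matI) (auto simp: mat_dsum_index list_mat_def list_tab_def)

lemma one_mat_eq_list_mat: "(1\<^sub>m n :: bit mat) = list_mat n (list_tab n (\<lambda>i j. if i = j then 1 else 0))"
  by (rule eq_matI) (simp_all add: list_mat_def list_tab_def)

lemma zero_mat_eq_list_mat: "(0\<^sub>m n n :: bit mat) = list_mat n (list_tab n (\<lambda>i j. 0))"
  by (rule eq_matI) (simp_all add: list_mat_def list_tab_def)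

lemma lmod_similar_list_mat:
  assumes "n = m" "list_mat_mult n S T = list_tab n (\<lambda>i j. if i = j then 1 else 0)"
    "list_mat_mult n T S = list_tab n (\<lambda>i j. if i = j then 1 else 0)"
    "list_mat_mult n S A = list_mat_mult n C S" "list_mat_mult n S B = list_mat_mult n D S"
  shows "lmod_similar (list_mat n A, list_mat n B) (list_mat m C, list_mat m D)"
proof (rule lmod_similar_sym, rule lmod_similarI[where P = "list_mat n S" and Q = "list_mat n T"])
qed (use assms in \<open>simp_all add: lmod_wf_def ldim_def list_mat_carrier list_mat_mult one_mat_eq_list_mat\<close>)

lemma Lam_eq_list_mat: "Lam =
  (list_mat 4 (list_tab 4 (\<lambda>i j. if (i, j) = (1, 0) \<or> (i, j) = (3, 2) then 1 else 0)),
   list_mat 4 (list_tab 4 (\<lambda>i j. if (i, j) = (2, 0) \<or> (i, j) = (3, 1) then 1 else 0)))"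
  unfolding Lam_def mat_eq_list_mat by simp

lemma LamQ1_eq_list_mat: "LamQ1 =
  (list_mat 2 (list_tab 2 (\<lambda>i j. if (i, j) = (1, 0) then 1 else 0)), list_mat 2 (list_tab 2 (\<lambda>i j. 0)))"
  unfolding LamQ1_def mat_eq_list_mat zero_mat_eq_list_mat by simp

lemma Mi_eq_list_mat: "Mi k =
  (list_mat 2 (list_tab 2 (\<lambda>i j. if (i, j) = (0, 1) then 1 else 0)), list_mat 2 (list_tab 2 (\<lambda>i j. 0)))"
  unfolding Mi_def mat_eq_list_mat zero_mat_eq_list_mat by simp

lemma lmod_zero_eq_list_mat: "lmod_zero = (list_mat 0 (list_tab 0 (\<lambda>i j. 0)), list_mat 0 (list_tab 0 (\<lambda>i j. 0)))"
  unfolding lmod_zero_def zero_mat_eq_list_mat by simp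

lemma lmod_wf_Lam: "lmod_wf Lam"
  and lmod_wf_LamQ1: "lmod_wf LamQ1"
  and lmod_wf_Mi: "lmod_wf (Mi k)"
  by (simp_all add: Lam_eq_list_mat LamQ1_eq_list_mat Mi_eq_list_mat lmod_wf_def ldim_def list_mat_carrier)

lemmas list_mat_simps = lmod_tensor_def Let_def ldim_def fst_conv snd_conv lmod_sum_def list_mat_dims
  one_mat_eq_list_mat kron_list_mat list_mat_add mat_dsum_list_mat

lemma Mi_similar_LamQ1: "lmod_similar (Mi k) LamQ1"
  unfolding Mi_eq_list_mat LamQ1_eq_list_mat
  by (rule lmod_similar_list_mat[where S = "[[0,1],[1,0]]" and T = "[[0,1],[1,0]]"]) code_simp+

lemma tensor_Lam_Mi_similar: "lmod_similar (lmod_tensor Lam (Mi k)) (lmod_copies 2 Lam)"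
  unfolding numeral_2_eq_2 lmod_copies.simps Lam_eq_list_mat Mi_eq_list_mat lmod_zero_eq_list_mat
  apply (simp only: list_mat_simps)
  by (rule lmod_similar_list_mat[where
      S = "[[0,1,0,0,0,0,0,0],[1,0,0,0,0,0,0,0],[0,0,0,0,0,1,0,0],[0,0,0,0,1,0,0,0],
            [1,0,0,1,0,0,0,0],[0,0,1,0,0,1,0,0],[0,0,0,0,1,0,0,1],[0,0,0,0,0,0,1,0]]" and
      T = "[[0,1,0,0,0,0,0,0],[1,0,0,0,0,0,0,0],[0,0,1,0,0,1,0,0],[0,1,0,0,1,0,0,0],
            [0,0,0,1,0,0,0,0],[0,0,1,0,0,0,0,0],[0,0,0,0,0,0,0,1],[0,0,0,1,0,0,1,0]]"]) code_simp+

lemma tensor_LamQ1_Mi_similar: "lmod_similar (lmod_tensor LamQ1 (Mi k)) (lmod_tensor (Mi k) (Mi k))"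
  unfolding LamQ1_eq_list_mat Mi_eq_list_mat
  apply (simp only: list_mat_simps)
  by (rule lmod_similar_list_mat[where S = "[[0,0,1,0],[1,0,0,0],[0,0,0,1],[0,1,0,0]]"
        and T = "[[0,1,0,0],[0,0,0,1],[1,0,0,0],[0,0,1,0]]"]) code_simp+

lemma tensor_Mi_Mi_Mi_similar:
  "lmod_similar (lmod_tensor (lmod_tensor (Mi k) (Mi k)) (Mi k)) (lmod_sum Lam (lmod_copies 2 LamQ1))"
  unfolding numeral_2_eq_2 lmod_copies.simps Lam_eq_list_mat LamQ1_eq_list_mat Mi_eq_list_mat
    lmod_zero_eq_list_mat
  apply (simp only: list_mat_simps)
  by (rule lmod_similar_list_mat[where
      S = "[[0,0,0,0,0,0,0,1],[0,0,0,1,0,1,1,0],[0,1,1,0,1,0,0,1],[1,0,0,0,0,0,1,1],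
            [0,0,0,0,0,1,1,0],[0,1,1,0,0,0,0,1],[0,0,0,1,0,1,0,0],[0,0,1,0,1,0,0,1]]" and
      T = "[[1,1,0,1,0,0,1,0],[0,0,1,0,0,0,0,1],[1,0,1,0,0,1,0,1],[0,1,0,0,1,0,0,0],
            [0,0,1,0,0,1,0,0],[0,1,0,0,1,0,1,0],[0,1,0,0,0,0,1,0],[1,0,0,0,0,0,0,0]]"]) code_simp+

section \<open>Stable classification\<close>

definition lmod_similar_mod_free :: "lmod \<Rightarrow> lmod \<Rightarrow> bool" where
  "lmod_similar_mod_free M N \<longleftrightarrow> (\<exists>a. lmod_similar M (lmod_sum (free_lmod a) N))"

lemma lmod_wf_free: "lmod_wf (free_lmod a)"
  by (simp add: free_lmod_def lmod_wf_copies lmod_wf_Lam)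

lemma stably_iso_if_similar_mod_free:
  assumes "lmod_similar_mod_free M N"
  shows "stably_iso M N"
proof -
  obtain a where a: "lmod_similar M (lmod_sum (free_lmod a) N)"
    using assms unfolding lmod_similar_mod_free_def by blast
  have "lmod_sum (free_lmod 0) M = M"
    using lmod_similarD(1)[OF a] by (simp add: free_lmod_def lmod_sum_zero_left)
  then show ?thesis
    unfolding stably_iso_def using lmod_similar_imp_iso[OF a] by metis
qed

lemma lmod_similar_mod_free_trans:
  assumes "lmod_similar_mod_free M N" "lmod_similar N N'"
  shows "lmod_similar_mod_free M N'"
proof -
  obtain a where "lmod_similar M (lmod_sum (free_lmod a) N)"
    using assms(1) unfolding lmod_similar_mod_free_def by blast
  also have "lmod_similar \<dots> (lmod_sum (free_lmod a) N')"
    by (intro lmod_similar_sum lmod_similar_refl lmod_wf_free assms(2))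
  finally show ?thesis unfolding lmod_similar_mod_free_def by blast
qed

lemma lmod_similar_mod_free_absorb:
  assumes "lmod_similar_mod_free M (lmod_sum (free_lmod b) N)"
  shows "lmod_similar_mod_free M N"
proof -
  obtain a where "lmod_similar M (lmod_sum (free_lmod a) (lmod_sum (free_lmod b) N))"
    using assms unfolding lmod_similar_mod_free_def by blast
  also have "lmod_sum (free_lmod a) (lmod_sum (free_lmod b) N) = lmod_sum (free_lmod (a + b)) N"
    by (simp add: free_lmod_def lmod_sum_assoc lmod_copies_add lmod_wf_Lam)
  finally show ?thesis unfolding lmod_similar_mod_free_def by blast
qed

lemma lmod_similar_mod_free_tensor_Mi:
  assumes "lmod_similar_mod_free M N" "lmod_wf N"
  shows "lmod_similar_mod_free (lmod_tensor M (Mi k)) (lmod_tensor N (Mi k))"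
proof -
  obtain a where "lmod_similar M (lmod_sum (free_lmod a) N)"
    using assms(1) unfolding lmod_similar_mod_free_def by blast
  then have "lmod_similar (lmod_tensor M (Mi k)) (lmod_tensor (lmod_sum (free_lmod a) N) (Mi k))"
    by (intro lmod_similar_tensor lmod_similar_refl lmod_wf_Mi)
  also have "lmod_tensor (lmod_sum (free_lmod a) N) (Mi k)
      = lmod_sum (lmod_copies a (lmod_tensor Lam (Mi k))) (lmod_tensor N (Mi k))"
    using assms(2) by (simp add: free_lmod_def lmod_tensor_sum_left lmod_copies_tensor lmod_wf_copies
        lmod_wf_Lam lmod_wf_Mi)
  also have "lmod_similar \<dots> (lmod_sum (lmod_copies a (lmod_copies 2 Lam)) (lmod_tensor N (Mi k)))"
    using assms(2) by (intro lmod_similar_sum lmod_similar_copies tensor_Lam_Mi_similar lmod_similar_refl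
        lmod_wf_tensor lmod_wf_Mi)
  also have "lmod_copies a (lmod_copies 2 Lam) = free_lmod (a * 2)"
    by (simp add: free_lmod_def lmod_copies_mult lmod_wf_Lam)
  finally show ?thesis unfolding lmod_similar_mod_free_def by blast
qed

lemma lmod_similar_mod_free_tensor_Mi_copies_LamQ1:
  assumes "lmod_similar_mod_free M (lmod_copies n LamQ1)"
  shows "lmod_similar_mod_free (lmod_tensor M (Mi k)) (lmod_copies n (lmod_tensor (Mi k) (Mi k)))"
proof (rule lmod_similar_mod_free_trans)
  show "lmod_similar_mod_free (lmod_tensor M (Mi k)) (lmod_tensor (lmod_copies n LamQ1) (Mi k))"
    using assms by (intro lmod_similar_mod_free_tensor_Mi lmod_wf_copies lmod_wf_LamQ1)
  show "lmod_similar (lmod_tensor (lmod_copies n LamQ1) (Mi k)) (lmod_copies n (lmod_tensor (Mi k) (Mi k)))"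
    by (simp add: lmod_copies_tensor lmod_wf_LamQ1 lmod_wf_Mi lmod_similar_copies tensor_LamQ1_Mi_similar)
qed

lemma lmod_similar_mod_free_tensor_Mi_copies_Mi_Mi:
  assumes "lmod_similar_mod_free M (lmod_copies n (lmod_tensor (Mi k) (Mi k)))"
  shows "lmod_similar_mod_free (lmod_tensor M (Mi k)) (lmod_copies (2 * n) LamQ1)"
proof (rule lmod_similar_mod_free_absorb[where b = n], rule lmod_similar_mod_free_trans)
  have wf: "lmod_wf (lmod_tensor (Mi k) (Mi k))" by (intro lmod_wf_tensor lmod_wf_Mi)
  show "lmod_similar_mod_free (lmod_tensor M (Mi k)) (lmod_tensor (lmod_copies n (lmod_tensor (Mi k) (Mi k))) (Mi k))"
    using assms wf by (intro lmod_similar_mod_free_tensor_Mi lmod_wf_copies)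
  have "lmod_tensor (lmod_copies n (lmod_tensor (Mi k) (Mi k))) (Mi k)
      = lmod_copies n (lmod_tensor (lmod_tensor (Mi k) (Mi k)) (Mi k))"
    using wf by (simp add: lmod_copies_tensor lmod_wf_Mi)
  also have "lmod_similar \<dots> (lmod_copies n (lmod_sum Lam (lmod_copies 2 LamQ1)))"
    by (intro lmod_similar_copies tensor_Mi_Mi_Mi_similar)
  also have "lmod_similar \<dots> (lmod_sum (lmod_copies n Lam) (lmod_copies n (lmod_copies 2 LamQ1)))"
    by (intro lmod_similar_copies_sum lmod_wf_Lam lmod_wf_copies lmod_wf_LamQ1)
  also have "\<dots> = lmod_sum (free_lmod n) (lmod_copies (2 * n) LamQ1)"
    by (simp add: free_lmod_def lmod_copies_mult lmod_wf_LamQ1 mult.commute)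
  finally show "lmod_similar (lmod_tensor (lmod_copies n (lmod_tensor (Mi k) (Mi k))) (Mi k))
      (lmod_sum (free_lmod n) (lmod_copies (2 * n) LamQ1))" .
qed

lemma lmod_tensor_pow_Mi_similar_mod_free:
  "lmod_similar_mod_free (lmod_tensor_pow (Mi k) (2 * t + 1)) (lmod_copies (2 ^ t) LamQ1)
   \<and> lmod_similar_mod_free (lmod_tensor_pow (Mi k) (2 * t + 2))
       (lmod_copies (2 ^ t) (lmod_tensor (Mi k) (Mi k)))"
proof -
  note pow_Suc = lmod_tensor_pow_Suc_right[OF lmod_wf_Mi]
  have even: "lmod_similar_mod_free (lmod_tensor_pow (Mi k) (2 * t + 2))
      (lmod_copies (2 ^ t) (lmod_tensor (Mi k) (Mi k)))"
    if "lmod_similar_mod_free (lmod_tensor_pow (Mi k) (2 * t + 1)) (lmod_copies (2 ^ t) LamQ1)" for t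
  proof -
    have e: "2 * t + 2 = Suc (2 * t + 1)" by simp
    show ?thesis
      unfolding e pow_Suc by (rule lmod_similar_mod_free_tensor_Mi_copies_LamQ1[OF that])
  qed
  have odd: "lmod_similar_mod_free (lmod_tensor_pow (Mi k) (2 * Suc t + 1)) (lmod_copies (2 ^ Suc t) LamQ1)"
    if "lmod_similar_mod_free (lmod_tensor_pow (Mi k) (2 * t + 2))
      (lmod_copies (2 ^ t) (lmod_tensor (Mi k) (Mi k)))" for t
  proof -
    have e: "2 * Suc t + 1 = Suc (2 * t + 2)" by simp
    show ?thesis
      unfolding e pow_Suc power_Suc by (rule lmod_similar_mod_free_tensor_Mi_copies_Mi_Mi[OF that])
  qed
  have "lmod_similar (lmod_tensor_pow (Mi k) (2 * 0 + 1)) (lmod_sum (free_lmod 0) (lmod_copies (2 ^ 0) LamQ1))"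
    using Mi_similar_LamQ1 by (simp add: free_lmod_def lmod_tensor_unit_right lmod_sum_zero_left
        lmod_sum_zero_right lmod_wf_Mi lmod_wf_LamQ1)
  then have "lmod_similar_mod_free (lmod_tensor_pow (Mi k) (2 * 0 + 1)) (lmod_copies (2 ^ 0) LamQ1)"
    unfolding lmod_similar_mod_free_def by blast
  then show ?thesis
    by (induction t) (use even odd in blast)+
qed

theorem mainTheorem8:
  fixes J :: "nat set" and n :: nat
  assumes "finite J" and "0 \<notin> J" and "card J = n" and "n \<ge> 1"
  shows "(\<forall>t. n = 2 * t + 1 \<longrightarrow> stably_iso (MJ J) (lmod_copies (2 ^ t) LamQ1))
       \<and> (\<forall>t. n = 2 * t \<longrightarrow> stably_iso (MJ J) (lmod_copies (2 ^ (t - 1)) (MJ {1, 2})))"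
proof (intro conjI allI impI)
  have MJ: "MJ J = lmod_tensor_pow (Mi 1) n" using assms(1,3) by (simp add: MJ_eq_tensor_pow)
  fix t
  show "stably_iso (MJ J) (lmod_copies (2 ^ t) LamQ1)" if "n = 2 * t + 1"
    unfolding MJ that using lmod_tensor_pow_Mi_similar_mod_free by (blast intro: stably_iso_if_similar_mod_free)
  assume n: "n = 2 * t"
  with assms(4) obtain s where s: "t = Suc s" by (cases t) auto
  have "MJ {1, 2} = lmod_tensor (Mi 1) (Mi 1)"
    by (simp add: MJ_eq_tensor_pow numeral_2_eq_2 lmod_tensor_unit_right lmod_wf_Mi)
  moreover have "n = 2 * s + 2" "t - 1 = s" using n s by simp_all
  ultimately show "stably_iso (MJ J) (lmod_copies (2 ^ (t - 1)) (MJ {1, 2}))"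
    unfolding MJ using lmod_tensor_pow_Mi_similar_mod_free by (simp add: stably_iso_if_similar_mod_free)
qed

end
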